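(* Let $m\ge 1$. In the chip-firing process on the self-loop graph beginning with $4m-1$ chips at site $0$ and run to completion, the number of firing moves at site $k$, for $-m\le k\le m$, is $(m-|k|)^2$.
   Context: The self-loop graph is the path graph on $\mathbb{Z}$ (each $i$ adjacent to $i\pm1$) with one self-loop at every vertex. A site can fire if it holds at least $3$ chips; firing sends one chip to each of the two neighboring sites and keeps one at the site. Running to completion means performing legal firing moves until every site has at most $2$ chips. *)

theory Defs
  imports Main
begin

type_synonym config = "int \<Rightarrow> nat"

text \<open>Firing site i: i loses 3 chips, keeps 1 via its self-loop (net -2),
and each neighbour i-1, i+1 gains one chip.\<close>
definition fire :: "config \<Rightarrow> int \<Rightarrow> config" where
  "fire c i = (\<lambda>j. if j = i then c j - 2
                   else if j = i - 1 \<or> j = i + 1 then c j + 1 else c j)"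

fun legal :: "config \<Rightarrow> int list \<Rightarrow> bool" where
  "legal c [] = True"
| "legal c (i # is) = (3 \<le> c i \<and> legal (fire c i) is)"

fun run :: "config \<Rightarrow> int list \<Rightarrow> config" where
  "run c [] = c"
| "run c (i # is) = run (fire c i) is"

definition stable :: "config \<Rightarrow> bool" where
  "stable c = (\<forall>j. c j \<le> 2)"

definition complete_run :: "config \<Rightarrow> int list \<Rightarrow> bool" where
  "complete_run c fs = (legal c fs \<and> stable (run c fs))"

definition point_config :: "nat \<Rightarrow> config" where
  "point_config N = (\<lambda>j. if j = 0 then N else 0)"

end

theory Submission
  imports Defs
begin

text \<open>Let \<open>c\<close> be the initial configuration and \<open>u(k) = (m - |k|)\<^sup>2\<close> (zero for \<open>|k| > m\<close>).
Then \<open>c + \<Delta>u\<close> is the stable configuration with one chip at \<open>0\<close> and at \<open>\<plusminus>m\<close> and two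
chips in between. By the least action principle every legal firing sequence fires each
site \<open>k\<close> at most \<open>u(k)\<close> times, so legal sequences have bounded length and a complete run
exists. Conversely, if \<open>f\<close> counts the firings of a complete run, then \<open>d = u - f\<close> is
nonnegative, vanishes at \<open>\<plusminus>m\<close>, and stability of the final configuration gives
\<open>\<Delta>d \<ge> 0\<close> on \<open>0 < |k| < m\<close> and \<open>\<Delta>d(0) \<ge> -1\<close>. An integer convex function that is positive
at \<open>0\<close> and vanishes at \<open>\<plusminus>m\<close> strictly decreases from \<open>0\<close> in both directions, which would
force \<open>\<Delta>d(0) \<le> -2\<close>; hence \<open>d(0) = 0\<close>, and convexity then gives \<open>d = 0\<close> on \<open>[-m, m]\<close>.\<close>

definition laplacian :: "(int \<Rightarrow> int) \<Rightarrow> int \<Rightarrow> int" where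
  "laplacian v j = v (j - 1) + v (j + 1) - 2 * v j"

definition odometer :: "int list \<Rightarrow> int \<Rightarrow> int" where
  "odometer fs j = int (count_list fs j)"

lemma legal_append: "legal c (xs @ ys) \<longleftrightarrow> legal c xs \<and> legal (run c xs) ys"
  by (induction xs arbitrary: c) auto

text \<open>Legality is needed because \<^const>\<open>fire\<close> subtracts on \<^typ>\<open>nat\<close>.\<close>

lemma run_eq_laplacian_odometer:
  "legal c fs \<Longrightarrow> int (run c fs j) = int (c j) + laplacian (odometer fs) j"
proof (induction fs arbitrary: c)
  case Nil
  then show ?case by (simp add: laplacian_def odometer_def)
next
  case (Cons i fs)
  then have "3 \<le> c i" and "legal (fire c i) fs" by auto
  then show ?case
    using Cons.IH by (auto simp: fire_def laplacian_def odometer_def)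
qed

lemma least_action_principle:
  assumes legal: "legal c fs" and nonneg: "\<And>j. 0 \<le> v j"
    and stabilizing: "\<And>j. int (c j) + laplacian v j \<le> 2"
  shows "odometer fs j \<le> v j"
proof -
  have "\<forall>j. odometer fs j \<le> v j"
    using legal
  proof (induction fs rule: rev_induct)
    case Nil
    then show ?case by (simp add: odometer_def nonneg)
  next
    case (snoc i fs)
    then have "legal c fs" and fires: "3 \<le> run c fs i"
      by (auto simp: legal_append)
    with snoc.IH have IH: "odometer fs j \<le> v j" for j
      by blast
    have "odometer fs i \<noteq> v i"
    proof
      assume "odometer fs i = v i"
      then have "int (run c fs i) \<le> int (c i) + laplacian v i"
        using run_eq_laplacian_odometer[OF \<open>legal c fs\<close>, of i] IH[of "i - 1"] IH[of "i + 1"]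
        by (simp add: laplacian_def)
      with fires stabilizing[of i] show False by linarith
    qed
    with IH[of i] have "odometer fs i < v i"
      by linarith
    with IH show ?case
      by (auto simp: odometer_def)
  qed
  then show ?thesis by blast
qed

lemma legal_length_le_sum:
  assumes "legal c fs" "\<And>j. 0 \<le> v j" "\<And>j. int (c j) + laplacian v j \<le> 2"
    and "finite S" "\<And>j. j \<notin> S \<Longrightarrow> v j = 0"
  shows "int (length fs) \<le> sum v S"
proof -
  have bounded: "odometer fs j \<le> v j" for j
    using least_action_principle assms(1-3) by blast
  have "set fs \<subseteq> S"
  proof
    fix j assume "j \<in> set fs"
    then have "0 < odometer fs j"
      by (simp add: odometer_def) (metis count_list_0_iff gr0I)
    with bounded[of j] assms(5)[of j] show "j \<in> S" by fastforce
  qed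
  then have "int (length fs) = (\<Sum>j\<in>S. odometer fs j)"
    by (simp add: odometer_def sum_count_set[symmetric] \<open>finite S\<close>)
  also have "\<dots> \<le> sum v S"
    by (rule sum_mono) (rule bounded)
  finally show ?thesis .
qed

lemma complete_run_exists:
  assumes "\<And>fs. legal c fs \<Longrightarrow> length fs \<le> B"
  shows "\<exists>fs. complete_run c fs"
proof -
  obtain fs where "legal c fs" and longest: "\<And>fs'. legal c fs' \<Longrightarrow> length fs' \<le> length fs"
    using Lattices_Big.ex_has_greatest_nat[of "legal c" "[]" length "Suc B"] assms
    by (metis le_imp_less_Suc legal.simps(1))
  have "stable (run c fs)"
  proof (rule ccontr)
    assume "\<not> stable (run c fs)"
    then obtain j where "2 < run c fs j"
      by (auto simp: stable_def not_le)
    with \<open>legal c fs\<close> have "legal c (fs @ [j])"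
      by (simp add: legal_append)
    with longest show False
      by fastforce
  qed
  with \<open>legal c fs\<close> show ?thesis
    by (auto simp: complete_run_def)
qed

definition subharmonic_on :: "int set \<Rightarrow> (int \<Rightarrow> int) \<Rightarrow> bool" where
  "subharmonic_on S g \<longleftrightarrow> (\<forall>i\<in>S. 0 \<le> laplacian g i)"

lemma subharmonic_on_subset: "subharmonic_on S g \<Longrightarrow> T \<subseteq> S \<Longrightarrow> subharmonic_on T g"
  by (auto simp: subharmonic_on_def)

lemma subharmonic_increment_mono:
  fixes g :: "int \<Rightarrow> int"
  assumes "subharmonic_on {a<..<b} g" and "a \<le> i" "i \<le> j" "j < b"
  shows "g (i + 1) - g i \<le> g (j + 1) - g j"
  using \<open>i \<le> j\<close> \<open>j < b\<close>
proof (induction j rule: int_ge_induct)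
  case base
  then show ?case by simp
next
  case (step j)
  then have "0 \<le> laplacian g (j + 1)"
    using assms(1,2) by (simp add: subharmonic_on_def)
  with step show ?case
    by (simp add: laplacian_def)
qed

lemma le_if_increments_nonneg:
  fixes g :: "int \<Rightarrow> int"
  assumes "a \<le> b" "\<And>i. a \<le> i \<Longrightarrow> i < b \<Longrightarrow> g i \<le> g (i + 1)"
  shows "g a \<le> g b"
  using assms
proof (induction b rule: int_ge_induct)
  case (step b)
  then show ?case by force
qed simp

lemma subharmonic_le_right_end:
  fixes g :: "int \<Rightarrow> int"
  assumes "subharmonic_on {a<..<b} g" and "a \<le> k" "k < b" "g k \<le> g (k + 1)"
  shows "g k \<le> g b"
proof (rule le_if_increments_nonneg[where g = g])
  fix i assume "k \<le> i" "i < b"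
  then show "g i \<le> g (i + 1)"
    using subharmonic_increment_mono[OF assms(1), of k i] assms by linarith
qed (use \<open>k < b\<close> in simp)

lemma subharmonic_le_left_end:
  fixes g :: "int \<Rightarrow> int"
  assumes "subharmonic_on {a<..<b} g" and "a < k" "k \<le> b" "g k \<le> g (k - 1)"
  shows "g k \<le> g a"
proof -
  have "- g a \<le> - g k"
  proof (rule le_if_increments_nonneg[where g = "\<lambda>i. - g i"])
    fix i assume "a \<le> i" "i < k"
    then show "- g i \<le> - g (i + 1)"
      using subharmonic_increment_mono[OF assms(1), of i "k - 1"] assms by simp
  qed (use \<open>a < k\<close> in simp)
  then show ?thesis by simp
qed

lemma subharmonic_le_max_ends:
  fixes g :: "int \<Rightarrow> int"
  assumes subharmonic: "subharmonic_on {a<..<b} g" and "a \<le> k" "k \<le> b"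
  shows "g k \<le> max (g a) (g b)"
proof -
  have "0 \<le> laplacian g k" if "a < k" "k < b"
    using subharmonic that by (simp add: subharmonic_on_def)
  then consider "k = a" | "k = b" | "a < k" "k < b" "g k \<le> g (k + 1)"
    | "a < k" "k < b" "g k \<le> g (k - 1)"
    using assms(2,3) unfolding laplacian_def by fastforce
  then show ?thesis
  proof cases
    case 3
    then show ?thesis
      using subharmonic_le_right_end[OF subharmonic, of k] by simp
  next
    case 4
    then show ?thesis
      using subharmonic_le_left_end[OF subharmonic, of k] by simp
  qed auto
qed

lemma nonneg_subharmonic_off_origin_vanishes:
  fixes g :: "int \<Rightarrow> int"
  assumes "0 < m" and nonneg: "\<And>j. 0 \<le> g j" and boundary: "g (- m) = 0" "g m = 0"
    and subharmonic: "subharmonic_on ({- m<..<m} - {0}) g"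
    and kink: "- 1 \<le> laplacian g 0"
    and "\<bar>k\<bar> \<le> m"
  shows "g k = 0"
proof -
  have right: "subharmonic_on {0<..<m} g" and left: "subharmonic_on {- m<..<0} g"
    by (auto intro: subharmonic_on_subset[OF subharmonic])
  have "g 0 = 0"
  proof (rule ccontr)
    assume "g 0 \<noteq> 0"
    with nonneg have "0 < g 0"
      by (simp add: order_le_neq_trans)
    then have "g 1 < g 0" and "g (- 1) < g 0"
      using subharmonic_le_right_end[OF right, of 0] subharmonic_le_left_end[OF left, of 0]
        \<open>0 < m\<close> boundary by force+
    with kink show False
      by (simp add: laplacian_def)
  qed
  then have "g k \<le> 0"
    using subharmonic_le_max_ends[OF right, of k] subharmonic_le_max_ends[OF left, of k]
      \<open>\<bar>k\<bar> \<le> m\<close> boundary by (cases "0 \<le> k") auto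
  with nonneg show ?thesis
    by (simp add: order_antisym)
qed

definition squared_tent :: "nat \<Rightarrow> int \<Rightarrow> int" where
  "squared_tent m j = (max 0 (int m - \<bar>j\<bar>))\<^sup>2"

definition final_config :: "nat \<Rightarrow> config" where
  "final_config m j = (if j = 0 \<or> \<bar>j\<bar> = int m then 1 else if \<bar>j\<bar> < int m then 2 else 0)"

lemma squared_tent_nonneg: "0 \<le> squared_tent m j"
  by (simp add: squared_tent_def)

lemma squared_tent_eq_0: "int m \<le> \<bar>j\<bar> \<Longrightarrow> squared_tent m j = 0"
  by (simp add: squared_tent_def)

lemma point_config_plus_laplacian_squared_tent:
  assumes "1 \<le> m"
  shows "int (point_config (4 * m - 1) j) + laplacian (squared_tent m) j = int (final_config m j)"
proof -
  consider "j = 0" | "0 < j" "j < int m" | "j = int m" | "j = int m + 1" | "int m + 1 < j"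
    | "- int m < j" "j < 0" | "j = - int m" | "j = - int m - 1" | "j < - int m - 1"
    by linarith
  then show ?thesis
    using assms
    by cases (simp_all add: point_config_def final_config_def laplacian_def squared_tent_def
        power2_eq_square algebra_simps)
qed

lemma point_config_stabilized_by_squared_tent:
  "1 \<le> m \<Longrightarrow> int (point_config (4 * m - 1) j) + laplacian (squared_tent m) j \<le> 2"
  using point_config_plus_laplacian_squared_tent by (simp add: final_config_def)

lemma complete_run_odometer_point_config:
  assumes "1 \<le> m" and complete: "complete_run (point_config (4 * m - 1)) fs"
    and "\<bar>k\<bar> \<le> int m"
  shows "odometer fs k = squared_tent m k"
proof -
  let ?c = "point_config (4 * m - 1)"
  have legal: "legal ?c fs" and stable: "\<And>j. run ?c fs j \<le> 2"
    using complete by (auto simp: complete_run_def stable_def)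
  define d where "d j = squared_tent m j - odometer fs j" for j
  have nonneg: "0 \<le> d j" for j
    using least_action_principle[OF legal squared_tent_nonneg
        point_config_stabilized_by_squared_tent[OF \<open>1 \<le> m\<close>]]
    by (simp add: d_def)
  have boundary: "d (- int m) = 0" "d (int m) = 0"
    using nonneg[of "- int m"] nonneg[of "int m"]
    by (simp_all add: d_def squared_tent_eq_0 odometer_def)
  have laplacian_d: "laplacian d j = int (final_config m j) - int (run ?c fs j)" for j
    using point_config_plus_laplacian_squared_tent[OF \<open>1 \<le> m\<close>, of j]
      run_eq_laplacian_odometer[OF legal, of j]
    by (simp add: d_def laplacian_def)
  have "subharmonic_on ({- int m<..<int m} - {0}) d"
    using stable by (auto simp: subharmonic_on_def laplacian_d final_config_def)
  moreover have "- 1 \<le> laplacian d 0"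
    using stable[of 0] by (simp add: laplacian_d final_config_def)
  ultimately have "d k = 0"
    using nonneg_subharmonic_off_origin_vanishes[OF _ nonneg boundary] assms by simp
  then show ?thesis
    by (simp add: d_def)
qed

theorem lemma3p9:
  fixes m :: nat
  assumes "m \<ge> 1"
  shows "(\<exists>fs. complete_run (point_config (4 * m - 1)) fs) \<and>
         (\<forall>fs k. complete_run (point_config (4 * m - 1)) fs \<longrightarrow>
                 - int m \<le> k \<longrightarrow> k \<le> int m \<longrightarrow>
                 count_list fs k = nat ((int m - \<bar>k\<bar>)^2))"
proof -
  let ?c = "point_config (4 * m - 1)" and ?total = "sum (squared_tent m) {- int m..int m}"
  have outside: "squared_tent m j = 0" if "j \<notin> {- int m..int m}" for j
    using that by (intro squared_tent_eq_0) auto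
  have "int (length fs) \<le> ?total" if "legal ?c fs" for fs
    using legal_length_le_sum[OF that squared_tent_nonneg
        point_config_stabilized_by_squared_tent[OF assms] finite_atLeastAtMost_int outside] .
  then have "\<exists>fs. complete_run ?c fs"
    by (intro complete_run_exists[of _ "nat ?total"]) fastforce
  moreover have "count_list fs k = nat ((int m - \<bar>k\<bar>)^2)"
    if "complete_run ?c fs" "- int m \<le> k" "k \<le> int m" for fs k
  proof -
    have "int (count_list fs k) = (int m - \<bar>k\<bar>)^2"
      using complete_run_odometer_point_config[OF assms that(1), of k] that
      by (simp add: odometer_def squared_tent_def)
    then show ?thesis
      by (metis nat_int)
  qed
  ultimately show ?thesis
    by blast
qed

end
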